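(* Fix an integer $d\geq 3$ and $\rho<1$. There exist constants $C,c>0$ and a function $\epsilon(n)\to 0$ as $n\to\infty$ (all depending only on $d,\rho$) such that the following holds for all sufficiently large $n$. Let $G_n$ be a $d$-regular graph on $n$ vertices whose transition matrix has all eigenvalues other than $1$ of absolute value at most $\rho$, let $v\in G_n$, and let $G$ be obtained by adding a new vertex $v'$ and the edge $\{v,v'\}$. Then for every vertex $u\neq v'$ there is a set of vertices $S_u$ with $|S_u|\geq (1-\epsilon(n))n$ such that for every $w\in S_u$ and every integer $t$ with $C\log n\leq t\leq n$, $$\mathbb{P}_u(X_t=w,\ \tau_{v'}\geq t)\geq \frac{c}{n}.$$
   Context: $(X_t)$ is simple random walk on $G$, $\mathbb{P}_u$ its law with $X_0=u$, and $\tau_{v'}=\min\{t\geq1:X_t=v'\}$. *)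

theory Defs
  imports "Jordan_Normal_Form.Char_Poly"
begin

definition regular_graph_on :: "nat \<Rightarrow> nat \<Rightarrow> (nat \<Rightarrow> nat \<Rightarrow> bool) \<Rightarrow> bool" where
  "regular_graph_on n d E \<longleftrightarrow>
     (\<forall>x y. E x y \<longrightarrow> x < n \<and> y < n) \<and>
     (\<forall>x y. E x y \<longleftrightarrow> E y x) \<and>
     (\<forall>x. \<not> E x x) \<and>
     (\<forall>x<n. card {y. y < n \<and> E x y} = d)"

definition trans_mat :: "nat \<Rightarrow> nat \<Rightarrow> (nat \<Rightarrow> nat \<Rightarrow> bool) \<Rightarrow> real mat" where
  "trans_mat n d E = mat n n (\<lambda>(i, j). if E i j then 1 / real d else 0)"

text \<open>All eigenvalues (with multiplicity, over the complex numbers) other than one copy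
  of the eigenvalue 1 have absolute value at most rho.\<close>
definition nontrivial_eigs_bounded :: "real mat \<Rightarrow> real \<Rightarrow> bool" where
  "nontrivial_eigs_bounded A \<rho> \<longleftrightarrow>
     (\<exists>q. char_poly A = [:-1, 1:] * q \<and>
          (\<forall>z::complex. poly (map_poly complex_of_real q) z = 0 \<longrightarrow> cmod z \<le> \<rho>))"

text \<open>Graph G obtained by attaching a new vertex v' = n to v.\<close>
definition add_leaf :: "nat \<Rightarrow> nat \<Rightarrow> (nat \<Rightarrow> nat \<Rightarrow> bool) \<Rightarrow> nat \<Rightarrow> nat \<Rightarrow> bool" where
  "add_leaf n v E x y \<longleftrightarrow> E x y \<or> (x = v \<and> y = n) \<or> (x = n \<and> y = v)"

definition srw_step :: "nat set \<Rightarrow> (nat \<Rightarrow> nat \<Rightarrow> bool) \<Rightarrow> nat \<Rightarrow> nat \<Rightarrow> real" where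
  "srw_step V E x y = (if E x y then 1 / real (card {z \<in> V. E x z}) else 0)"

text \<open>avoid_prob V E a t u w = P_u(X_t = w, X_s \<noteq> a for all 1 \<le> s \<le> t-1),
  i.e. P_u(X_t = w, tau_a \<ge> t) with tau_a = min{s \<ge> 1. X_s = a}.\<close>
fun avoid_prob :: "nat set \<Rightarrow> (nat \<Rightarrow> nat \<Rightarrow> bool) \<Rightarrow> nat \<Rightarrow> nat \<Rightarrow> nat \<Rightarrow> nat \<Rightarrow> real" where
  "avoid_prob V E a 0 u w = (if u = w then 1 else 0)"
| "avoid_prob V E a (Suc t) u w =
     (\<Sum>y\<in>V. avoid_prob V E a t u y * (if t = 0 \<or> y \<noteq> a then 1 else 0) * srw_step V E y w)"

end

theory Submission
  imports Defs "Jordan_Normal_Form.Schur_Decomposition" "HOL-Analysis.Convex"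
begin

text \<open>Before the walk on \<open>G\<close> first enters \<open>v'\<close> it is the walk on \<open>G\<^sub>n\<close> in which every step out of
  \<open>v\<close> is damped by the factor \<open>\<theta> = d / (d + 1)\<close>. If \<open>K\<close> counts the visits to \<open>v\<close>, then by
  Markov's inequality this damped weight is at least
  \<open>\<theta>\<^sup>L (P\<^sub>u(X\<^sub>t = w) - E\<^sub>u[K; X\<^sub>t = w] / L)\<close>.

  The spectral hypothesis gives \<open>tr P\<^sup>2\<^sup>k \<le> 1 + n \<rho>\<^sup>2\<^sup>k\<close>, i.e. the squared \<open>\<ell>\<^sup>2\<close>-distances
  \<open>D(u,k)\<close> of \<open>P\<^sup>k(u,\<cdot>)\<close> from the uniform distribution sum to at most \<open>n \<rho>\<^sup>2\<^sup>k\<close>. Since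
  \<open>D(u,k)\<^sup>2 \<le> D(u,2k)\<close> by Cauchy--Schwarz, iterating the squaring removes the factor \<open>n\<close>, so
  \<open>|P\<^sup>k(u,w) - 1/n| \<le> \<rho>\<^sup>k\<close> for every pair. Hence \<open>P\<^sub>u(X\<^sub>t = w) \<ge> 1/(2n)\<close> once
  \<open>t \<ge> C log n\<close>, and \<open>E\<^sub>u[K; X\<^sub>t = w] = \<Sum>\<^sub>s P\<^sup>s(u,v) P\<^sup>t\<^sup>-\<^sup>s(v,w) = O(1/n)\<close> for all \<open>w\<close>
  outside the at most \<open>O(log n)\<close> vertices where the Green function of \<open>v\<close> up to the mixing
  time exceeds \<open>1\<close>; a large constant \<open>L\<close> then gives the bound \<open>\<theta>\<^sup>L / (4n)\<close>.\<close>

lemma index_mult_mat_sum: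
  assumes "A \<in> carrier_mat n m" "B \<in> carrier_mat m p" "i < n" "j < p"
  shows "(A * B) $$ (i,j) = (\<Sum>k<m. A $$ (i,k) * B $$ (k,j))"
  using assms by (auto simp: scalar_prod_def lessThan_atLeast0 intro!: sum.cong)

definition mat_trace :: "'a::comm_ring_1 mat \<Rightarrow> 'a" where
  "mat_trace A = (\<Sum>i<dim_row A. A $$ (i,i))"

lemma mat_trace_mult_comm:
  fixes A B :: "'a::comm_ring_1 mat"
  assumes A: "A \<in> carrier_mat n n" and B: "B \<in> carrier_mat n n"
  shows "mat_trace (A * B) = mat_trace (B * A)"
proof -
  have "mat_trace (A * B) = (\<Sum>i<n. (A * B) $$ (i,i))" unfolding mat_trace_def using A by simp
  also have "\<dots> = (\<Sum>i<n. \<Sum>k<n. A $$ (i,k) * B $$ (k,i))"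
    by (intro sum.cong refl index_mult_mat_sum[OF A B]) auto
  also have "\<dots> = (\<Sum>k<n. \<Sum>i<n. B $$ (k,i) * A $$ (i,k))"
    by (subst sum.swap) (simp add: mult.commute)
  also have "\<dots> = (\<Sum>k<n. (B * A) $$ (k,k))"
    by (intro sum.cong refl index_mult_mat_sum[OF B A, symmetric]) auto
  also have "\<dots> = mat_trace (B * A)" unfolding mat_trace_def using B by simp
  finally show ?thesis .
qed

lemma upper_triangular_power:
  fixes B :: "'a::comm_ring_1 mat"
  assumes B: "B \<in> carrier_mat n n" and ut: "upper_triangular B"
  shows "upper_triangular (B ^\<^sub>m k) \<and> (\<forall>i<n. (B ^\<^sub>m k) $$ (i,i) = B $$ (i,i) ^ k)"
proof (induction k)
  case 0
  then show ?case using B by (auto simp: upper_triangular_def)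
next
  case (Suc k)
  have Bk: "B ^\<^sub>m k \<in> carrier_mat n n" using B by simp
  have entry: "(B ^\<^sub>m Suc k) $$ (i,j) = (\<Sum>l<n. (B ^\<^sub>m k) $$ (i,l) * B $$ (l,j))"
    if "i < n" "j < n" for i j
    using index_mult_mat_sum[OF Bk B that] by simp
  have vanish: "(B ^\<^sub>m k) $$ (i,l) * B $$ (l,j) = 0"
    if "i < n" "l < n" "l < i \<or> j < l" for i j l
    using Suc.IH ut B that by (auto simp: upper_triangular_def)
  have "upper_triangular (B ^\<^sub>m Suc k)"
  proof (rule upper_triangularI)
    fix i j assume "j < i" "i < dim_row (B ^\<^sub>m Suc k)"
    with B have ij: "j < i" "i < n" by auto
    then have "(B ^\<^sub>m Suc k) $$ (i,j) = (\<Sum>l<n. (B ^\<^sub>m k) $$ (i,l) * B $$ (l,j))"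
      by (intro entry) auto
    also have "\<dots> = 0" using ij by (intro sum.neutral ballI vanish) auto
    finally show "(B ^\<^sub>m Suc k) $$ (i,j) = 0" .
  qed
  moreover have "(B ^\<^sub>m Suc k) $$ (i,i) = B $$ (i,i) ^ Suc k" if i: "i < n" for i
  proof -
    have "(B ^\<^sub>m Suc k) $$ (i,i) = (\<Sum>l\<in>{i}. (B ^\<^sub>m k) $$ (i,l) * B $$ (l,i))"
      unfolding entry[OF i i]
    proof (rule sum.mono_neutral_right)
      show "\<forall>l\<in>{..<n} - {i}. (B ^\<^sub>m k) $$ (i,l) * B $$ (l,i) = 0"
        using i by (auto intro!: vanish)
    qed (use i in auto)
    then show ?thesis using Suc.IH i by simp
  qed
  ultimately show ?case by blast
qed

lemma mat_trace_power_eigenvalues: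
  fixes A :: "complex mat"
  assumes A: "A \<in> carrier_mat n n" and char: "char_poly A = (\<Prod>e\<leftarrow>es. [:- e, 1:])"
  shows "mat_trace (A ^\<^sub>m k) = (\<Sum>e\<leftarrow>es. e ^ k)"
proof -
  obtain B P Q where schur: "schur_decomposition A es = (B,P,Q)"
    by (cases "schur_decomposition A es") auto
  from schur_decomposition[OF A char schur]
  have sim: "similar_mat_wit A B P Q" and ut: "upper_triangular B" and diag: "diag_mat B = es"
    by auto
  note wit = similar_mat_witD2[OF A sim]
  have B: "B \<in> carrier_mat n n" and P: "P \<in> carrier_mat n n" and Q: "Q \<in> carrier_mat n n"
    using wit by auto
  have Bk: "B ^\<^sub>m k \<in> carrier_mat n n" using B by simp
  have "mat_trace (A ^\<^sub>m k) = mat_trace (P * B ^\<^sub>m k * Q)"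
    by (simp add: similar_mat_wit_pow_id[OF sim])
  also have "\<dots> = mat_trace (Q * (P * B ^\<^sub>m k))"
    by (rule mat_trace_mult_comm[OF mult_carrier_mat[OF P Bk] Q])
  also have "Q * (P * B ^\<^sub>m k) = B ^\<^sub>m k"
    using assoc_mult_mat[OF Q P Bk] wit Bk by simp
  also have "mat_trace (B ^\<^sub>m k) = (\<Sum>i<n. B $$ (i,i) ^ k)"
    unfolding mat_trace_def using upper_triangular_power[OF B ut, of k] wit Bk by simp
  also have "\<dots> = (\<Sum>e\<leftarrow>es. e ^ k)"
    unfolding diag[symmetric] diag_mat_def using B
    by (simp add: sum_set_upt_conv_sum_list_nat[symmetric] atLeast0LessThan comp_def)
  finally show ?thesis .
qed

lemma norm_sum_list_power_le:
  fixes es :: "'a::real_normed_field list"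
  assumes "\<And>e. e \<in> set es \<Longrightarrow> norm e \<le> r"
  shows "norm (\<Sum>e\<leftarrow>es. e ^ k) \<le> real (length es) * r ^ k"
  using assms
proof (induction es)
  case (Cons a es)
  have "norm (a ^ k) \<le> r ^ k"
    unfolding norm_power using Cons.prems by (auto intro: power_mono)
  with Cons show ?case
    using norm_triangle_ineq[of "a ^ k" "\<Sum>e\<leftarrow>es. e ^ k"] by (auto simp: algebra_simps)
qed simp

lemma nontrivial_eigs_bounded_mono:
  "nontrivial_eigs_bounded A \<rho> \<Longrightarrow> \<rho> \<le> \<rho>' \<Longrightarrow> nontrivial_eigs_bounded A \<rho>'"
  unfolding nontrivial_eigs_bounded_def by force

text \<open>Over \<open>\<complex>\<close> the characteristic polynomial splits; the eigenvalue \<open>1\<close> contributes \<open>1\<close> to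
  the trace of every power and the remaining \<open>n - 1\<close> eigenvalues at most \<open>\<rho>\<^sup>k\<close> each.\<close>
lemma mat_trace_power_le:
  fixes A :: "real mat"
  assumes A: "A \<in> carrier_mat n n" and eigs: "nontrivial_eigs_bounded A \<rho>"
  shows "mat_trace (A ^\<^sub>m k) \<le> 1 + real (n - 1) * \<rho> ^ k"
proof -
  obtain q where char: "char_poly A = [:-1, 1:] * q"
    and roots: "\<And>z::complex. poly (map_poly complex_of_real q) z = 0 \<Longrightarrow> cmod z \<le> \<rho>"
    using eigs unfolding nontrivial_eigs_bounded_def by auto
  define Ac where "Ac = map_mat complex_of_real A"
  define qc where "qc = map_poly complex_of_real q"
  have Ac: "Ac \<in> carrier_mat n n" using A unfolding Ac_def by simp
  interpret of_real_poly: map_poly_comm_ring_hom complex_of_real ..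
  have char_c: "char_poly Ac = [:-1, 1:] * qc"
    unfolding Ac_def qc_def of_real_hom.char_poly_hom[OF A] char of_real_poly.hom_mult by simp
  obtain es where es: "char_poly Ac = (\<Prod>e\<leftarrow>es. [:- e, 1:])" and len: "length es = n"
    using char_poly_factorized[OF Ac] by auto
  have "poly (char_poly Ac) 1 = 0" unfolding char_c by simp
  hence one: "1 \<in> set es" unfolding es by (auto simp: poly_prod_list_zero_iff)
  define rs where "rs = remove1 1 es"
  have "[:-1, 1:] * qc = [:-1, 1:] * (\<Prod>e\<leftarrow>rs. [:- e, 1:])"
    using char_c es prod_list_map_remove1[OF one, of "\<lambda>e. [:- e, 1:]"] unfolding rs_def by simp
  hence qc: "qc = (\<Prod>e\<leftarrow>rs. [:- e, 1:])" by (metis mult_cancel_left pCons_eq_0_iff zero_neq_one)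
  have "cmod e \<le> \<rho>" if "e \<in> set rs" for e
    using roots[of e] linear_poly_root[OF that] unfolding qc[unfolded qc_def] by simp
  hence rest: "cmod (\<Sum>e\<leftarrow>rs. e ^ k) \<le> real (n - 1) * \<rho> ^ k"
    using norm_sum_list_power_le[of rs \<rho> k] len one unfolding rs_def by (simp add: length_remove1)
  have "complex_of_real (mat_trace (A ^\<^sub>m k)) = mat_trace (Ac ^\<^sub>m k)"
    unfolding Ac_def of_real_hom.mat_hom_pow[OF A, symmetric] mat_trace_def using A by simp
  also have "\<dots> = 1 + (\<Sum>e\<leftarrow>rs. e ^ k)"
    unfolding mat_trace_power_eigenvalues[OF Ac es] rs_def
    using sum_list_map_remove1[OF one, of "\<lambda>e. e ^ k"] by simp
  finally have "cmod (complex_of_real (mat_trace (A ^\<^sub>m k) - 1)) \<le> real (n - 1) * \<rho> ^ k"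
    using rest by (simp add: algebra_simps)
  thus ?thesis unfolding norm_of_real abs_le_iff by linarith
qed

primrec walk_prob :: "nat \<Rightarrow> (nat \<Rightarrow> nat \<Rightarrow> real) \<Rightarrow> nat \<Rightarrow> nat \<Rightarrow> nat \<Rightarrow> real" where
  "walk_prob n M 0 u w = (if u = w then 1 else 0)"
| "walk_prob n M (Suc k) u w = (\<Sum>y<n. walk_prob n M k u y * M y w)"

lemma walk_prob_one: "v < n \<Longrightarrow> walk_prob n M 1 v w = M v w"
  by (simp add: if_distrib[of "\<lambda>z. z * _"] sum.If_cases)

lemma walk_prob_add:
  assumes "u < n" "w < n"
  shows "walk_prob n M (a + b) u w = (\<Sum>y<n. walk_prob n M a u y * walk_prob n M b y w)"
  using assms(2)
proof (induction b arbitrary: w)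
  case 0
  then show ?case by (simp add: if_distrib[of "\<lambda>z. _ * z"] sum.If_cases)
next
  case (Suc b)
  have "walk_prob n M (a + Suc b) u w
      = (\<Sum>z<n. \<Sum>y<n. walk_prob n M a u y * walk_prob n M b y z * M z w)"
    using Suc.IH by (simp add: sum_distrib_right mult.assoc)
  also have "\<dots> = (\<Sum>y<n. walk_prob n M a u y * walk_prob n M (Suc b) y w)"
    by (subst sum.swap) (simp add: sum_distrib_left mult.assoc)
  finally show ?case .
qed

lemma walk_prob_nonneg: "(\<And>y w. 0 \<le> M y w) \<Longrightarrow> 0 \<le> walk_prob n M k u w"
  by (induction k arbitrary: w) (auto intro!: sum_nonneg)

lemma walk_prob_row_sum:
  assumes "\<And>y. y < n \<Longrightarrow> (\<Sum>w<n. M y w) = 1" "u < n"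
  shows "(\<Sum>w<n. walk_prob n M k u w) = 1"
proof (induction k)
  case 0
  then show ?case using assms(2) by (simp add: sum.If_cases)
next
  case (Suc k)
  have "(\<Sum>w<n. walk_prob n M (Suc k) u w) = (\<Sum>y<n. walk_prob n M k u y * (\<Sum>w<n. M y w))"
    by (simp add: sum_distrib_left) (rule sum.swap)
  with Suc.IH assms(1) show ?case by simp
qed

lemma walk_prob_sym:
  assumes "\<And>y w. M y w = M w y" "u < n" "w < n"
  shows "walk_prob n M k u w = walk_prob n M k w u"
  using assms(2,3)
proof (induction k arbitrary: u w)
  case (Suc k)
  have "walk_prob n M (Suc k) u w = (\<Sum>y<n. M w y * walk_prob n M k y u)"
    using Suc assms(1) by (auto simp: mult.commute intro!: sum.cong)
  also have "\<dots> = (\<Sum>y<n. walk_prob n M 1 w y * walk_prob n M k y u)"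
    using Suc.prems by (simp only: walk_prob_one)
  also have "\<dots> = walk_prob n M (1 + k) w u"
    using walk_prob_add[of w n u M 1 k] Suc.prems by simp
  finally show ?case by simp
qed simp

lemma walk_prob_eq_mat_power:
  assumes A: "A \<in> carrier_mat n n" and "\<And>y w. y < n \<Longrightarrow> w < n \<Longrightarrow> A $$ (y,w) = M y w"
    and "u < n" "w < n"
  shows "(A ^\<^sub>m k) $$ (u,w) = walk_prob n M k u w"
  using assms(3,4)
proof (induction k arbitrary: w)
  case 0
  then show ?case using A by simp
next
  case (Suc k)
  have "(A ^\<^sub>m Suc k) $$ (u,w) = (\<Sum>y<n. (A ^\<^sub>m k) $$ (u,y) * A $$ (y,w))"
    using index_mult_mat_sum[of "A ^\<^sub>m k" n n A n] A Suc.prems by simp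
  also have "\<dots> = walk_prob n M (Suc k) u w" using Suc assms(2) by simp
  finally show ?case .
qed

lemma le_if_power_of_two_powers_le:
  fixes x a N :: real
  assumes a: "0 < a" and bound: "\<And>m. x ^ (2 ^ m) \<le> N * a ^ (2 ^ m)"
  shows "x \<le> a"
proof (rule ccontr)
  assume "\<not> x \<le> a"
  define r where "r = x / a"
  have r: "1 < r" unfolding r_def using a \<open>\<not> x \<le> a\<close> by simp
  have grow: "1 + real m * (r - 1) \<le> N" for m
  proof -
    have "1 + real m * (r - 1) \<le> 1 + real (2 ^ m) * (r - 1)"
      using r by (intro add_left_mono mult_right_mono) (auto simp: less_imp_le_nat less_exp)
    also have "\<dots> \<le> (1 + (r - 1)) ^ (2 ^ m)" by (rule Bernoulli_inequality) (use r in auto)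
    also have "\<dots> \<le> N"
      using bound[of m] a by (simp add: r_def power_divide divide_le_eq)
    finally show ?thesis .
  qed
  obtain m :: nat where "N / (r - 1) < real m" using reals_Archimedean2 by blast
  hence "N < real m * (r - 1)" using r by (simp add: pos_divide_less_eq)
  with grow[of m] show False by linarith
qed

locale symmetric_stochastic =
  fixes n :: nat and M :: "nat \<Rightarrow> nat \<Rightarrow> real"
  assumes n_pos: "0 < n"
    and sym: "\<And>y w. M y w = M w y"
    and nonneg: "\<And>y w. 0 \<le> M y w"
    and row_sum: "\<And>y. y < n \<Longrightarrow> (\<Sum>w<n. M y w) = 1"
begin

abbreviation "p \<equiv> walk_prob n M"

lemma p_row_sum: "u < n \<Longrightarrow> (\<Sum>w<n. p k u w) = 1"
  by (rule walk_prob_row_sum) (use row_sum in auto)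

lemma p_sym: "u < n \<Longrightarrow> w < n \<Longrightarrow> p k u w = p k w u"
  by (rule walk_prob_sym[OF sym])

lemma p_nonneg: "0 \<le> p k u w"
  by (rule walk_prob_nonneg) (rule nonneg)

definition dist_uniform_sq :: "nat \<Rightarrow> nat \<Rightarrow> real" where
  "dist_uniform_sq u k = (\<Sum>w<n. (p k u w - 1 / real n)\<^sup>2)"

lemma dist_uniform_sq_nonneg: "0 \<le> dist_uniform_sq u k"
  unfolding dist_uniform_sq_def by (intro sum_nonneg) simp

lemma dist_uniform_sq_eq_return:
  assumes u: "u < n"
  shows "dist_uniform_sq u k = p (2 * k) u u - 1 / real n"
proof -
  have "dist_uniform_sq u k
      = (\<Sum>w<n. p k u w * p k u w) - 2 / real n * (\<Sum>w<n. p k u w) + real n * (1 / real n)\<^sup>2"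
    unfolding dist_uniform_sq_def
    by (simp add: power2_eq_square algebra_simps sum_subtractf sum.distrib sum_distrib_left)
  also have "(\<Sum>w<n. p k u w * p k u w) = (\<Sum>w<n. p k u w * p k w u)"
    using u p_sym by (intro sum.cong refl) auto
  also have "\<dots> = p (2 * k) u u" using walk_prob_add[OF u u, of M k k] by (simp add: mult_2)
  finally show ?thesis using p_row_sum[OF u] n_pos by (simp add: power2_eq_square field_simps)
qed

text \<open>Cauchy--Schwarz applied to \<open>p\<^sub>2\<^sub>k(u,u) - 1/n = \<langle>\<delta>\<^sub>u - 1/n, p\<^sub>2\<^sub>k(u,\<cdot>) - 1/n\<rangle>\<close>.\<close>
lemma dist_uniform_sq_square_le:
  assumes u: "u < n"
  shows "(dist_uniform_sq u k)\<^sup>2 \<le> dist_uniform_sq u (2 * k)"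
proof -
  define x where "x w = (if w = u then 1 else 0) - 1 / real n" for w
  define y where "y w = p (2 * k) u w - 1 / real n" for w
  have sum_y: "(\<Sum>w<n. y w) = 0" unfolding y_def using p_row_sum[OF u] n_pos by (simp add: sum_subtractf)
  have "(\<Sum>w<n. x w * y w) = (\<Sum>w<n. (if w = u then y w else 0) - 1 / real n * y w)"
    unfolding x_def by (intro sum.cong refl) (auto simp: algebra_simps)
  also have "\<dots> = y u - 1 / real n * (\<Sum>w<n. y w)"
    using u by (simp add: sum_subtractf sum_distrib_left)
  also have "\<dots> = dist_uniform_sq u k"
    using sum_y unfolding dist_uniform_sq_eq_return[OF u] by (simp add: y_def)
  finally have xy: "(\<Sum>w<n. x w * y w) = dist_uniform_sq u k" .
  have "(dist_uniform_sq u k)\<^sup>2 \<le> (\<Sum>w<n. (x w)\<^sup>2) * (\<Sum>w<n. (y w)\<^sup>2)"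
    using Cauchy_Schwarz_ineq_sum[of x y "{..<n}"] unfolding xy .
  also have "\<dots> \<le> 1 * dist_uniform_sq u (2 * k)"
  proof (rule mult_mono)
    have "(\<Sum>w<n. (x w)\<^sup>2) = (\<Sum>w<n. (if w = u then 1 - 2 / real n else 0) + 1 / real n ^ 2)"
      unfolding x_def by (intro sum.cong refl) (auto simp: power2_eq_square field_simps)
    also have "\<dots> = 1 - 1 / real n" using u n_pos by (simp add: sum.distrib power2_eq_square)
    finally show "(\<Sum>w<n. (x w)\<^sup>2) \<le> 1" by simp
    show "(\<Sum>w<n. (y w)\<^sup>2) \<le> dist_uniform_sq u (2 * k)"
      unfolding y_def dist_uniform_sq_def by simp
  qed (simp_all add: sum_nonneg)
  finally show ?thesis by (simp only: mult_1)
qed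

lemma dist_uniform_sq_power_le:
  assumes u: "u < n"
  shows "(dist_uniform_sq u k) ^ (2 ^ m) \<le> dist_uniform_sq u (2 ^ m * k)"
proof (induction m)
  case (Suc m)
  have "(dist_uniform_sq u k) ^ (2 ^ Suc m) = ((dist_uniform_sq u k) ^ (2 ^ m))\<^sup>2"
    by (simp only: power_Suc2 power_mult)
  also have "\<dots> \<le> (dist_uniform_sq u (2 ^ m * k))\<^sup>2"
    by (rule power_mono[OF Suc.IH zero_le_power[OF dist_uniform_sq_nonneg]])
  also have "\<dots> \<le> dist_uniform_sq u (2 ^ Suc m * k)"
    using dist_uniform_sq_square_le[OF u] by (simp add: mult.assoc)
  finally show ?case .
qed simp

text \<open>The trace bound only controls \<open>\<Sum>\<^sub>u dist_uniform_sq u k \<le> n \<rho>\<^sup>2\<^sup>k\<close>; the squaring inequality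
  above amplifies away the factor \<open>n\<close>.\<close>
lemma walk_prob_near_uniform:
  assumes trace: "\<And>k. (\<Sum>i<n. p (2 * k) i i) \<le> 1 + real (n - 1) * \<rho> ^ (2 * k)"
    and \<rho>: "0 < \<rho>" and u: "u < n" and w: "w < n"
  shows "\<bar>p k u w - 1 / real n\<bar> \<le> \<rho> ^ k"
proof -
  have total: "dist_uniform_sq u j \<le> real n * (\<rho> ^ (2 * k)) ^ (2 ^ m)" if "j = 2 ^ m * k" for j m
  proof -
    have "dist_uniform_sq u j \<le> (\<Sum>i<n. dist_uniform_sq i j)"
      using u by (intro member_le_sum) (auto intro: dist_uniform_sq_nonneg)
    also have "\<dots> = (\<Sum>i<n. p (2 * j) i i) - 1"
      using n_pos by (simp add: dist_uniform_sq_eq_return sum_subtractf)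
    also have "\<dots> \<le> real n * \<rho> ^ (2 * j)"
    proof -
      have "real (n - 1) * \<rho> ^ (2 * j) \<le> real n * \<rho> ^ (2 * j)"
        using \<rho> by (intro mult_right_mono) auto
      with trace[of j] show ?thesis by linarith
    qed
    finally show ?thesis using that by (simp add: power_mult[symmetric] ac_simps)
  qed
  have "dist_uniform_sq u k \<le> \<rho> ^ (2 * k)"
  proof (rule le_if_power_of_two_powers_le)
    show "0 < \<rho> ^ (2 * k)" using \<rho> by simp
    show "(dist_uniform_sq u k) ^ (2 ^ m) \<le> real n * (\<rho> ^ (2 * k)) ^ (2 ^ m)" for m
      using dist_uniform_sq_power_le[OF u, of k m] total[of "2 ^ m * k" m] by linarith
  qed
  moreover have "(p k u w - 1 / real n)\<^sup>2 \<le> dist_uniform_sq u k"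
    unfolding dist_uniform_sq_def using w by (intro member_le_sum) auto
  ultimately have "\<bar>p k u w - 1 / real n\<bar>\<^sup>2 \<le> (\<rho> ^ k)\<^sup>2"
    unfolding power2_abs power_even_eq[symmetric] by linarith
  thus ?thesis by (rule power2_le_imp_le) (use \<rho> in simp)
qed

end

text \<open>\<open>visit_walk_prob n M v t k u w\<close> is the weight of the \<open>t\<close>-step paths from \<open>u\<close> to \<open>w\<close> that
  visit \<open>v\<close> exactly \<open>k\<close> times at the times \<open>0, \<dots>, t - 1\<close>.\<close>
primrec visit_walk_prob ::
  "nat \<Rightarrow> (nat \<Rightarrow> nat \<Rightarrow> real) \<Rightarrow> nat \<Rightarrow> nat \<Rightarrow> nat \<Rightarrow> nat \<Rightarrow> nat \<Rightarrow> real" where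
  "visit_walk_prob n M v 0 k u w = (if k = 0 \<and> u = w then 1 else 0)"
| "visit_walk_prob n M v (Suc t) k u w =
     (\<Sum>y<n. (if y = v then (case k of 0 \<Rightarrow> 0 | Suc j \<Rightarrow> visit_walk_prob n M v t j u y)
             else visit_walk_prob n M v t k u y) * M y w)"

definition expected_visits :: "nat \<Rightarrow> (nat \<Rightarrow> nat \<Rightarrow> real) \<Rightarrow> nat \<Rightarrow> nat \<Rightarrow> nat \<Rightarrow> nat \<Rightarrow> real" where
  "expected_visits n M v t u w = (\<Sum>s<t. walk_prob n M s u v * walk_prob n M (t - s) v w)"

lemma visit_walk_prob_eq_0: "t < k \<Longrightarrow> visit_walk_prob n M v t k u w = 0"
  by (induction t arbitrary: k w) (auto split: nat.split intro!: sum.neutral)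

lemma visit_walk_prob_nonneg: "(\<And>y w. 0 \<le> M y w) \<Longrightarrow> 0 \<le> visit_walk_prob n M v t k u w"
  by (induction t arbitrary: k w) (auto split: nat.split intro!: sum_nonneg mult_nonneg_nonneg)

lemma visit_walk_prob_weighted_Suc:
  fixes f :: "nat \<Rightarrow> real"
  shows "(\<Sum>k\<le>Suc t. f k * visit_walk_prob n M v (Suc t) k u w) =
    (\<Sum>y<n. (if y = v then (\<Sum>k\<le>t. f (Suc k) * visit_walk_prob n M v t k u y)
            else (\<Sum>k\<le>t. f k * visit_walk_prob n M v t k u y)) * M y w)"
proof -
  have shift: "(\<Sum>k\<le>Suc t. f k * (case k of 0 \<Rightarrow> 0 | Suc j \<Rightarrow> visit_walk_prob n M v t j u y))
      = (\<Sum>k\<le>t. f (Suc k) * visit_walk_prob n M v t k u y)" for y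
    by (subst sum.atMost_Suc_shift) simp
  have last: "(\<Sum>k\<le>Suc t. f k * visit_walk_prob n M v t k u y)
      = (\<Sum>k\<le>t. f k * visit_walk_prob n M v t k u y)" for y
    using visit_walk_prob_eq_0[of t "Suc t" n M v u y] by simp
  have "(\<Sum>k\<le>Suc t. f k * visit_walk_prob n M v (Suc t) k u w)
      = (\<Sum>y<n. (\<Sum>k\<le>Suc t. f k * (if y = v
          then (case k of 0 \<Rightarrow> 0 | Suc j \<Rightarrow> visit_walk_prob n M v t j u y)
          else visit_walk_prob n M v t k u y)) * M y w)"
    by (simp only: visit_walk_prob.simps sum_distrib_left sum_distrib_right mult.assoc)
      (rule sum.swap)
  also have "\<dots> = (\<Sum>y<n. (if y = v then (\<Sum>k\<le>t. f (Suc k) * visit_walk_prob n M v t k u y)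
      else (\<Sum>k\<le>t. f k * visit_walk_prob n M v t k u y)) * M y w)"
  proof (rule sum.cong[OF refl])
    show "(\<Sum>k\<le>Suc t. f k * (if y = v
          then (case k of 0 \<Rightarrow> 0 | Suc j \<Rightarrow> visit_walk_prob n M v t j u y)
          else visit_walk_prob n M v t k u y)) * M y w
        = (if y = v then (\<Sum>k\<le>t. f (Suc k) * visit_walk_prob n M v t k u y)
          else (\<Sum>k\<le>t. f k * visit_walk_prob n M v t k u y)) * M y w" for y
      by (cases "y = v") (simp_all only: shift last if_True if_False simp_thms)
  qed
  finally show ?thesis .
qed

lemma sum_visit_walk_prob: "(\<Sum>k\<le>t. visit_walk_prob n M v t k u w) = walk_prob n M t u w"
proof (induction t arbitrary: w)
  case (Suc t)
  have "(\<Sum>k\<le>Suc t. 1 * visit_walk_prob n M v (Suc t) k u w) = walk_prob n M (Suc t) u w"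
    unfolding visit_walk_prob_weighted_Suc using Suc.IH by simp
  thus ?case by simp
qed simp

lemma visit_generating_function:
  "(\<Sum>k\<le>t. \<theta> ^ k * visit_walk_prob n M v t k u w)
     = walk_prob n (\<lambda>y w. (if y = v then \<theta> else 1) * M y w) t u w"
proof (induction t arbitrary: w)
  case (Suc t)
  have "(\<Sum>k\<le>t. \<theta> ^ Suc k * visit_walk_prob n M v t k u y)
      = \<theta> * (\<Sum>k\<le>t. \<theta> ^ k * visit_walk_prob n M v t k u y)" for y
    by (simp add: sum_distrib_left mult.assoc)
  then show ?case unfolding visit_walk_prob_weighted_Suc using Suc.IH
    by (auto intro!: sum.cong)
qed simp

lemma expected_visits_eq:
  assumes v: "v < n"
  shows "(\<Sum>k\<le>t. real k * visit_walk_prob n M v t k u w) = expected_visits n M v t u w"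
proof (induction t arbitrary: w)
  case 0
  then show ?case by (simp add: expected_visits_def)
next
  case (Suc t)
  let ?p = "walk_prob n M"
  have step: "(\<Sum>k\<le>t. real (Suc k) * visit_walk_prob n M v t k u y)
      = expected_visits n M v t u y + ?p t u y" for y
    using Suc.IH[of y] sum_visit_walk_prob[of n M v t u y] by (simp add: algebra_simps sum.distrib)
  have "(\<Sum>k\<le>Suc t. real k * visit_walk_prob n M v (Suc t) k u w)
      = (\<Sum>y<n. expected_visits n M v t u y * M y w + (if y = v then ?p t u v * M v w else 0))"
    unfolding visit_walk_prob_weighted_Suc
    by (intro sum.cong refl) (simp add: step Suc.IH algebra_simps del: of_nat_Suc)
  also have "\<dots> = (\<Sum>y<n. expected_visits n M v t u y * M y w) + ?p t u v * M v w"
    using v by (simp add: sum.distrib)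
  also have "\<dots> = expected_visits n M v (Suc t) u w"
  proof -
    have "(\<Sum>y<n. expected_visits n M v t u y * M y w)
        = (\<Sum>s<t. ?p s u v * ?p (Suc (t - s)) v w)"
      unfolding expected_visits_def
      by (simp add: sum_distrib_left sum_distrib_right mult.assoc Suc_diff_le) (rule sum.swap)
    thus ?thesis
      unfolding expected_visits_def using walk_prob_one[OF v] by (simp add: Suc_diff_le)
  qed
  finally show ?case .
qed

text \<open>Markov's inequality for the visit count \<open>K\<close>:
  \<open>E[\<theta>\<^sup>K; X\<^sub>t = w] \<ge> \<theta>\<^sup>L P(K \<le> L, X\<^sub>t = w) \<ge> \<theta>\<^sup>L (P(X\<^sub>t = w) - E[K; X\<^sub>t = w] / L)\<close>.\<close>
lemma damped_walk_prob_lower: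
  assumes nonneg: "\<And>y w. 0 \<le> M y w" and v: "v < n" and L: "0 < L"
    and \<theta>: "0 \<le> \<theta>" "\<theta> \<le> 1"
  shows "\<theta> ^ L * (walk_prob n M t u w - expected_visits n M v t u w / real L)
     \<le> walk_prob n (\<lambda>y w. (if y = v then \<theta> else 1) * M y w) t u w"
proof -
  have weight: "\<theta> ^ L * (1 - real k / real L) \<le> \<theta> ^ k" for k
  proof (cases "k \<le> L")
    case True
    have "\<theta> ^ L * (1 - real k / real L) \<le> \<theta> ^ L" using \<theta> L by (simp add: mult_left_le)
    also have "\<dots> \<le> \<theta> ^ k" using \<theta> True by (simp add: power_decreasing)
    finally show ?thesis .
  next
    case False
    hence "1 - real k / real L \<le> 0" using L by (simp add: field_simps)
    hence "\<theta> ^ L * (1 - real k / real L) \<le> 0" using \<theta> by (simp add: mult_nonneg_nonpos)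
    also have "\<dots> \<le> \<theta> ^ k" using \<theta> by simp
    finally show ?thesis .
  qed
  have "\<theta> ^ L * (walk_prob n M t u w - expected_visits n M v t u w / real L)
      = \<theta> ^ L * ((\<Sum>k\<le>t. visit_walk_prob n M v t k u w)
          - (\<Sum>k\<le>t. real k * visit_walk_prob n M v t k u w) / real L)"
    by (simp only: sum_visit_walk_prob expected_visits_eq[OF v])
  also have "\<dots> = (\<Sum>k\<le>t. \<theta> ^ L * (1 - real k / real L) * visit_walk_prob n M v t k u w)"
    by (simp add: algebra_simps sum_subtractf sum_distrib_left sum_divide_distrib)
  also have "\<dots> \<le> (\<Sum>k\<le>t. \<theta> ^ k * visit_walk_prob n M v t k u w)"
    by (intro sum_mono mult_right_mono weight visit_walk_prob_nonneg nonneg)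
  also have "\<dots> = walk_prob n (\<lambda>y w. (if y = v then \<theta> else 1) * M y w) t u w"
    by (rule visit_generating_function)
  finally show ?thesis .
qed

definition graph_kernel :: "nat \<Rightarrow> (nat \<Rightarrow> nat \<Rightarrow> bool) \<Rightarrow> nat \<Rightarrow> nat \<Rightarrow> real" where
  "graph_kernel d E y w = (if E y w then 1 / real d else 0)"

locale regular_graph =
  fixes n d :: nat and E :: "nat \<Rightarrow> nat \<Rightarrow> bool"
  assumes regular: "regular_graph_on n d E" and n_pos: "0 < n" and d_pos: "0 < d"
begin

lemma edge_less: "E x y \<Longrightarrow> x < n \<and> y < n"
  using regular unfolding regular_graph_on_def by blast

lemma edge_sym: "E x y = E y x"
  using regular unfolding regular_graph_on_def by blast

lemma degree: "x < n \<Longrightarrow> card {y. y < n \<and> E x y} = d"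
  using regular unfolding regular_graph_on_def by blast

lemma graph_kernel_row_sum:
  assumes y: "y < n"
  shows "(\<Sum>w<n. graph_kernel d E y w) = 1"
proof -
  have "(\<Sum>w<n. graph_kernel d E y w) = (\<Sum>w\<in>{w. w < n \<and> E y w}. 1 / real d)"
    unfolding graph_kernel_def by (simp add: sum.If_cases Collect_conj_eq lessThan_def Int_commute)
  also have "\<dots> = 1" using degree[OF y] d_pos by simp
  finally show ?thesis .
qed

sublocale symmetric_stochastic n "graph_kernel d E"
proof
  show "0 < n" by (rule n_pos)
  show "graph_kernel d E y w = graph_kernel d E w y" for y w
    unfolding graph_kernel_def using edge_sym[of y w] by simp
  show "0 \<le> graph_kernel d E y w" for y w unfolding graph_kernel_def by simp
qed (rule graph_kernel_row_sum)

lemma trans_mat_carrier: "trans_mat n d E \<in> carrier_mat n n"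
  unfolding trans_mat_def by simp

lemma walk_prob_near_uniform_of_eigs:
  assumes eigs: "nontrivial_eigs_bounded (trans_mat n d E) \<rho>" and \<rho>: "0 < \<rho>"
    and u: "u < n" and w: "w < n"
  shows "\<bar>p k u w - 1 / real n\<bar> \<le> \<rho> ^ k"
proof (rule walk_prob_near_uniform[OF _ \<rho> u w])
  fix k
  have "(\<Sum>i<n. p (2 * k) i i) = mat_trace (trans_mat n d E ^\<^sub>m (2 * k))"
    unfolding mat_trace_def using trans_mat_carrier
    by (auto intro!: sum.cong walk_prob_eq_mat_power[symmetric]
        simp: trans_mat_def graph_kernel_def)
  also have "\<dots> \<le> 1 + real (n - 1) * \<rho> ^ (2 * k)"
    by (rule mat_trace_power_le[OF trans_mat_carrier eigs])
  finally show "(\<Sum>i<n. p (2 * k) i i) \<le> 1 + real (n - 1) * \<rho> ^ (2 * k)" .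
qed

end

locale regular_graph_with_leaf = regular_graph +
  fixes v :: nat
  assumes v: "v < n"
begin

lemma srw_step_add_leaf:
  assumes y: "y < n" and w: "w < n"
  shows "srw_step {0..n} (add_leaf n v E) y w
    = (if y = v then real d / (real d + 1) else 1) * graph_kernel d E y w"
proof -
  have "{z \<in> {0..n}. add_leaf n v E y z} = {z. z < n \<and> E y z} \<union> (if y = v then {n} else {})"
    using y unfolding add_leaf_def by (auto dest: edge_less)
  hence "card {z \<in> {0..n}. add_leaf n v E y z} = d + (if y = v then 1 else 0)"
    using degree[OF y] by (auto simp: card_insert_if)
  moreover have "add_leaf n v E y w = E y w" using y w unfolding add_leaf_def by auto
  ultimately show ?thesis
    unfolding srw_step_def graph_kernel_def using d_pos by auto
qed

lemma avoid_prob_eq_damped_walk: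
  assumes u: "u < n" and w: "w < n"
  shows "avoid_prob {0..n} (add_leaf n v E) n t u w
    = walk_prob n (\<lambda>y w. (if y = v then real d / (real d + 1) else 1) * graph_kernel d E y w) t u w"
  using w
proof (induction t arbitrary: w)
  case (Suc t)
  define f where "f y = avoid_prob {0..n} (add_leaf n v E) n t u y
    * (if t = 0 \<or> y \<noteq> n then 1 else 0) * srw_step {0..n} (add_leaf n v E) y w" for y
  have "f n = 0" unfolding f_def using u by (cases t) auto
  moreover have "{0..n} = insert n {..<n}" by auto
  ultimately have "avoid_prob {0..n} (add_leaf n v E) n (Suc t) u w = (\<Sum>y<n. f y)"
    unfolding avoid_prob.simps f_def[symmetric] by simp
  also have "\<dots> = walk_prob n
      (\<lambda>y w. (if y = v then real d / (real d + 1) else 1) * graph_kernel d E y w) (Suc t) u w"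
    unfolding f_def using Suc by (simp add: srw_step_add_leaf)
  finally show ?case .
qed simp

end

lemma card_greater_one_le_sum:
  fixes g :: "'a \<Rightarrow> real"
  assumes "finite A" and "\<And>x. x \<in> A \<Longrightarrow> 0 \<le> g x"
  shows "real (card {x \<in> A. 1 < g x}) \<le> sum g A"
proof -
  have "real (card {x \<in> A. 1 < g x}) = (\<Sum>x\<in>{x \<in> A. 1 < g x}. 1)" by simp
  also have "\<dots> \<le> (\<Sum>x\<in>{x \<in> A. 1 < g x}. g x)" by (intro sum_mono) auto
  also have "\<dots> \<le> sum g A" using assms by (intro sum_mono2) auto
  finally show ?thesis .
qed

lemma log_plus_one_over_n_tendsto_0: "(\<lambda>n. (a * ln (real n) + 1) / real n) \<longlonglongrightarrow> 0"
proof -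
  have "(\<lambda>n. a * (ln (real n) / real n) + 1 / real n) \<longlonglongrightarrow> a * 0 + 0"
    by (intro tendsto_intros lim_inverse_n'
        filterlim_compose[OF ln_x_over_x_tendsto_0 filterlim_real_sequentially])
  thus ?thesis by (simp add: add_divide_distrib)
qed

locale expander_with_leaf = regular_graph_with_leaf +
  fixes \<rho> :: real
  assumes eigs: "nontrivial_eigs_bounded (trans_mat n d E) \<rho>"
    and \<rho>_pos: "0 < \<rho>" and \<rho>_less_1: "\<rho> < 1"
    and n_ge_2: "2 \<le> n"
begin

definition mixing_time :: real where
  "mixing_time = 2 / (- ln \<rho>) * ln (real n)"

definition green_before_mixing :: "nat \<Rightarrow> real" where
  "green_before_mixing w = (\<Sum>r<nat \<lceil>mixing_time\<rceil>. p (Suc r) v w)"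

lemma mixing_time_nonneg: "0 \<le> mixing_time"
  unfolding mixing_time_def using \<rho>_pos \<rho>_less_1 n_ge_2 by (simp add: divide_nonneg_neg)

lemma power_le_after_mixing:
  assumes "mixing_time \<le> real s"
  shows "\<rho> ^ s \<le> 1 / (2 * real n)"
proof -
  have ln: "ln \<rho> < 0" using \<rho>_pos \<rho>_less_1 by simp
  have "real s * ln \<rho> \<le> mixing_time * ln \<rho>" using assms ln by (intro mult_right_mono_neg) auto
  also have "\<dots> = ln (1 / real n ^ 2)"
    unfolding mixing_time_def using ln n_ge_2 by (simp add: ln_div ln_realpow)
  finally have "\<rho> ^ s \<le> 1 / real n ^ 2"
    using \<rho>_pos n_ge_2 by (simp add: ln_realpow[symmetric] del: ln_div)
  also have "\<dots> \<le> 1 / (2 * real n)" using n_ge_2 by (simp add: field_simps power2_eq_square)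
  finally show ?thesis .
qed

lemma walk_prob_close_to_uniform:
  "a < n \<Longrightarrow> b < n \<Longrightarrow> \<bar>p k a b - 1 / real n\<bar> \<le> \<rho> ^ k"
  by (rule walk_prob_near_uniform_of_eigs[OF eigs \<rho>_pos])

lemma walk_prob_after_mixing:
  assumes "mixing_time \<le> real s" "a < n" "b < n"
  shows "1 / (2 * real n) \<le> p s a b" and "p s a b \<le> 2 / real n"
  using walk_prob_close_to_uniform[OF assms(2,3), of s] power_le_after_mixing[OF assms(1)] n_ge_2
  by (auto simp: field_simps)

lemma sum_walk_prob_le:
  assumes "a < n" "b < n" "t \<le> n"
  shows "(\<Sum>s<t. p s a b) \<le> 1 + 1 / (1 - \<rho>)"
proof -
  have "(\<Sum>s<t. p s a b) \<le> (\<Sum>s<t. 1 / real n + \<rho> ^ s)"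
  proof (rule sum_mono)
    show "p s a b \<le> 1 / real n + \<rho> ^ s" for s
      using walk_prob_close_to_uniform[OF assms(1,2), of s] unfolding abs_le_iff by linarith
  qed
  also have "\<dots> = real t / real n + (1 - \<rho> ^ t) / (1 - \<rho>)"
    using \<rho>_less_1 by (simp add: sum.distrib sum_gp_strict)
  also have "\<dots> \<le> 1 + 1 / (1 - \<rho>)"
    using assms \<rho>_pos \<rho>_less_1 by (intro add_mono divide_right_mono) auto
  finally show ?thesis .
qed

lemma card_green_before_mixing_large:
  "real (card {w \<in> {..<n}. 1 < green_before_mixing w}) \<le> mixing_time + 1"
proof -
  have "real (card {w \<in> {..<n}. 1 < green_before_mixing w}) \<le> (\<Sum>w<n. green_before_mixing w)"
    unfolding green_before_mixing_def by (intro card_greater_one_le_sum sum_nonneg p_nonneg) auto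
  also have "\<dots> = real (nat \<lceil>mixing_time\<rceil>)"
    unfolding green_before_mixing_def using v
    by (subst sum.swap) (simp add: p_row_sum del: walk_prob.simps)
  also have "\<dots> \<le> mixing_time + 1" using mixing_time_nonneg by linarith
  finally show ?thesis .
qed

lemma sum_walk_prob_before_mixing_le_green:
  "(\<Sum>s<t. if real (t - s) < mixing_time then p (t - s) v w else 0) \<le> green_before_mixing w"
proof -
  define h where "h k = (if real k < mixing_time then p k v w else 0)" for k
  have "(\<Sum>s<t. h (t - s)) = (\<Sum>r<t. h (Suc r))"
    by (subst sum.nat_diff_reindex[symmetric]) (auto intro!: sum.cong simp: Suc_diff_Suc)
  also have "\<dots> = (\<Sum>r\<in>{r \<in> {..<t}. real (Suc r) < mixing_time}. p (Suc r) v w)"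
    unfolding h_def by (rule sum.inter_filter[symmetric]) simp
  also have "\<dots> \<le> green_before_mixing w"
    unfolding green_before_mixing_def
  proof (rule sum_mono2)
    show "{r \<in> {..<t}. real (Suc r) < mixing_time} \<subseteq> {..<nat \<lceil>mixing_time\<rceil>}"
      by (auto simp: less_ceiling_iff zless_nat_eq_int_zless)
  qed (auto simp del: walk_prob.simps intro: p_nonneg)
  finally show ?thesis unfolding h_def .
qed

text \<open>In \<open>\<Sum>\<^sub>s p\<^sub>s(u,v) p\<^sub>t\<^sub>-\<^sub>s(v,w)\<close> at least one of \<open>s\<close>, \<open>t - s\<close> exceeds the mixing time, where the
  corresponding factor is at most \<open>2/n\<close>; the other factor then sums to \<open>O(1)\<close>, for the second one
  because \<open>w\<close> has a small Green function.\<close>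
lemma expected_visits_le:
  assumes u: "u < n" and w: "w < n" and green: "green_before_mixing w \<le> 1"
    and t: "2 * mixing_time \<le> real t" "t \<le> n"
  shows "expected_visits n (graph_kernel d E) v t u w \<le> 2 * (2 + 1 / (1 - \<rho>)) / real n"
proof -
  define h where "h k = (if real k < mixing_time then p k v w else 0)" for k
  have factor_bound: "p s u v * p (t - s) v w \<le> 2 / real n * p s u v + 2 / real n * h (t - s)"
    if "s < t" for s
  proof (cases "real (t - s) < mixing_time")
    case True
    hence "p s u v \<le> 2 / real n"
      using t that u v by (intro walk_prob_after_mixing) (auto simp: of_nat_diff)
    hence "p s u v * p (t - s) v w \<le> 2 / real n * p (t - s) v w"
      by (intro mult_right_mono p_nonneg)
    moreover have "0 \<le> 2 / real n * p s u v" by (simp add: p_nonneg)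
    ultimately show ?thesis unfolding h_def if_P[OF True] by linarith
  next
    case False
    hence "p (t - s) v w \<le> 2 / real n" using v w by (intro walk_prob_after_mixing) auto
    hence "p s u v * p (t - s) v w \<le> p s u v * (2 / real n)" by (intro mult_left_mono p_nonneg)
    thus ?thesis unfolding h_def using False by (simp add: mult.commute)
  qed
  have sum_h: "(\<Sum>s<t. h (t - s)) \<le> 1"
    using sum_walk_prob_before_mixing_le_green[of t w] green unfolding h_def by linarith
  have "expected_visits n (graph_kernel d E) v t u w
      \<le> (\<Sum>s<t. 2 / real n * p s u v + 2 / real n * h (t - s))"
    unfolding expected_visits_def by (intro sum_mono factor_bound) simp
  also have "\<dots> = 2 / real n * ((\<Sum>s<t. p s u v) + (\<Sum>s<t. h (t - s)))"
    by (simp add: sum.distrib sum_distrib_left distrib_left)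
  also have "\<dots> \<le> 2 / real n * ((1 + 1 / (1 - \<rho>)) + 1)"
    using sum_walk_prob_le[OF u v t(2)] sum_h by (intro mult_left_mono add_mono) auto
  finally show ?thesis by (simp add: field_simps)
qed

lemma avoid_prob_lower:
  assumes u: "u < n" and w: "w < n" and green: "green_before_mixing w \<le> 1"
    and t: "2 * mixing_time \<le> real t" "t \<le> n"
    and L: "8 * (2 + 1 / (1 - \<rho>)) \<le> real L"
  shows "(real d / (real d + 1)) ^ L / 4 / real n \<le> avoid_prob {0..n} (add_leaf n v E) n t u w"
proof -
  let ?\<theta> = "real d / (real d + 1)"
  have "0 < 8 * (2 + 1 / (1 - \<rho>))" using \<rho>_less_1 by (simp add: add_pos_pos)
  with L have L_pos: "0 < L" by simp
  have "expected_visits n (graph_kernel d E) v t u w / real L \<le> 1 / (4 * real n)"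
    using expected_visits_le[OF u w green t] L L_pos n_ge_2 by (auto simp: field_simps)
  moreover have "1 / (2 * real n) \<le> p t u w"
    using t mixing_time_nonneg u w by (intro walk_prob_after_mixing) auto
  ultimately have "1 / (4 * real n) \<le> p t u w - expected_visits n (graph_kernel d E) v t u w / real L"
    by (simp add: field_simps)
  hence "?\<theta> ^ L * (1 / (4 * real n))
      \<le> ?\<theta> ^ L * (p t u w - expected_visits n (graph_kernel d E) v t u w / real L)"
    by (intro mult_left_mono) auto
  also have "\<dots> \<le> avoid_prob {0..n} (add_leaf n v E) n t u w"
    unfolding avoid_prob_eq_damped_walk[OF u w]
    by (intro damped_walk_prob_lower nonneg v L_pos) auto
  finally show ?thesis by simp
qed

lemma good_targets_exist:
  assumes u: "u < n" and L: "8 * (2 + 1 / (1 - \<rho>)) \<le> real L"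
  shows "\<exists>S \<subseteq> {0..n}. real n - (mixing_time + 1) \<le> real (card S) \<and>
     (\<forall>w\<in>S. \<forall>t::nat. 2 * mixing_time \<le> real t \<and> t \<le> n \<longrightarrow>
        (real d / (real d + 1)) ^ L / 4 / real n \<le> avoid_prob {0..n} (add_leaf n v E) n t u w)"
proof (intro exI conjI ballI allI impI)
  let ?S = "{w \<in> {..<n}. green_before_mixing w \<le> 1}"
  let ?B = "{w \<in> {..<n}. 1 < green_before_mixing w}"
  have "card ?S + card ?B = card (?S \<union> ?B)" by (rule card_Un_disjoint[symmetric]) auto
  also have "?S \<union> ?B = {..<n}" by auto
  finally have "real (card ?S) + real (card ?B) = real n" by (metis card_lessThan of_nat_add)
  thus "real n - (mixing_time + 1) \<le> real (card ?S)"
    using card_green_before_mixing_large by linarith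
  show "?S \<subseteq> {0..n}" by auto
  show "(real d / (real d + 1)) ^ L / 4 / real n \<le> avoid_prob {0..n} (add_leaf n v E) n t u w"
    if "w \<in> ?S" "2 * mixing_time \<le> real t \<and> t \<le> n" for w t
    using that by (intro avoid_prob_lower u L) auto
qed

end

theorem lemma3p2:
  fixes d :: nat and \<rho> :: real
  assumes "d \<ge> 3" and "\<rho> < 1"
  shows "\<exists>C c :: real. \<exists>\<epsilon> :: nat \<Rightarrow> real. C > 0 \<and> c > 0 \<and> \<epsilon> \<longlonglongrightarrow> 0 \<and>
    (\<exists>N. \<forall>n \<ge> N. \<forall>E v.
       regular_graph_on n d E \<and> nontrivial_eigs_bounded (trans_mat n d E) \<rho> \<and> v < n \<longrightarrow>
       (\<forall>u \<le> n. u \<noteq> n \<longrightarrow>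
          (\<exists>S \<subseteq> {0..n}. real (card S) \<ge> (1 - \<epsilon> n) * real n \<and>
             (\<forall>w \<in> S. \<forall>t::nat. C * ln (real n) \<le> real t \<and> t \<le> n \<longrightarrow>
                avoid_prob {0..n} (add_leaf n v E) n t u w \<ge> c / real n))))"
proof -
  define \<rho>' where "\<rho>' = max \<rho> (1 / 2)"
  have \<rho>': "\<rho> \<le> \<rho>'" "0 < \<rho>'" "\<rho>' < 1" unfolding \<rho>'_def using assms by auto
  define L where "L = nat \<lceil>8 * (2 + 1 / (1 - \<rho>'))\<rceil>"
  define \<epsilon> where "\<epsilon> n = (2 / (- ln \<rho>') * ln (real n) + 1) / real n" for n :: nat
  have "\<epsilon> \<longlonglongrightarrow> 0" unfolding \<epsilon>_def by (rule log_plus_one_over_n_tendsto_0)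
  moreover have "0 < 4 / (- ln \<rho>')" and "0 < (real d / (real d + 1)) ^ L / 4"
    using \<rho>' assms(1) by auto
  moreover have "\<exists>S \<subseteq> {0..n}. real (card S) \<ge> (1 - \<epsilon> n) * real n \<and>
      (\<forall>w \<in> S. \<forall>t::nat. 4 / (- ln \<rho>') * ln (real n) \<le> real t \<and> t \<le> n \<longrightarrow>
         avoid_prob {0..n} (add_leaf n v E) n t u w \<ge> (real d / (real d + 1)) ^ L / 4 / real n)"
    if "2 \<le> n" "regular_graph_on n d E" "nontrivial_eigs_bounded (trans_mat n d E) \<rho>" "v < n"
      "u < n" for n E v u
  proof -
    interpret expander_with_leaf n d E v \<rho>'
      using that assms \<rho>' nontrivial_eigs_bounded_mono by unfold_locales auto
    have size: "(1 - \<epsilon> n) * real n = real n - (mixing_time + 1)"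
      and time: "4 / (- ln \<rho>') * ln (real n) = 2 * mixing_time"
      unfolding \<epsilon>_def mixing_time_def using that(1) by (auto simp: field_simps)
    have "8 * (2 + 1 / (1 - \<rho>')) \<le> real L" unfolding L_def by (rule real_nat_ceiling_ge)
    from good_targets_exist[OF \<open>u < n\<close> this] show ?thesis unfolding size time .
  qed
  ultimately show ?thesis
    by (intro exI[of _ "4 / (- ln \<rho>')"] exI[of _ "(real d / (real d + 1)) ^ L / 4"] exI[of _ \<epsilon>]
        conjI exI[of _ 2]) (auto simp: le_neq_implies_less)
qed

end
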